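(* Let $(\mathcal M,X,\bot)$ be a concurrent system. (1) If $\alpha\in X$ satisfies $\mathcal M_\alpha\ne\{\varepsilon\}$, then every pair $(\alpha,c)$ with $c$ a maximal element (for inclusion) of $\mathfrak C_\alpha$ is a positive node of the DSC. (2) If $((\alpha,c),(\alpha',c'))$ is an arc of the DSC and $(\alpha',c')$ is positive, then $(\alpha,c)$ is positive. (3) For every $\alpha\in X$ and every $x\in\mathcal M_\alpha$ there exists $y\in\mathcal M_{\alpha\cdot x}$ such that $xy$ has the same height as $x$ and all nodes of the DSC path corresponding to $xy$ are positive. (4) If $(\alpha,c)$ is a null node, then for every $x\in\mathcal M_\alpha$ with $C_1(x)=c$ there exists a letter $a\in\Sigma$ such that $x\in\mathcal M^a$, i.e. $x$ has no occurrence of $a$.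
   Context: A trace monoid $\mathcal M=\mathcal M(\Sigma,I)$ is $\langle\Sigma\mid ab=ba\ ((a,b)\in I)\rangle$, $\Sigma$ finite, $I$ irreflexive symmetric; $\varepsilon$ is the unit; for $a\in\Sigma$, $\mathcal M^a=\langle\Sigma\setminus\{a\}\rangle$. A clique is a trace of pairwise distinct letters pairwise in $I$; $\mathfrak C$ is the set of nonempty cliques; for $c,c'\in\mathfrak C$, $c\to c'$ means every letter of $c'$ is in relation $(\Sigma\times\Sigma)\setminus I$ with some letter of $c$. Each nonempty trace $x$ has a unique normal form $x=c_1\cdots c_h$, $c_i\in\mathfrak C$, $c_i\to c_{i+1}$; $h$ is the height of $x$ (height of $\varepsilon$ is $0$) and $C_1(x)=c_1$. A concurrent system $(\mathcal M,X,\bot)$: $X$ finite, $\bot\notin X$, right action of $\mathcal M$ on $X\cup\{\bot\}$ with $\bot\cdot x=\bot$; $\mathcal M_\alpha=\{x:\alpha\cdot x\ne\bot\}$, $\mathfrak C_\alpha=\mathfrak C\cap\mathcal M_\alpha$. DSC: nodes $(\alpha,c)$, $c\in\mathfrak C_\alpha$, arc $(\alpha,c)\to(\beta,d)$ iff $\beta=\alpha\cdot c$ and $c\to d$. The DSC path corresponding to $x\in\mathcal M_\alpha\setminus\{\varepsilon\}$ with normal form $c_1\cdots c_h$ is $((\alpha_0,c_1),\dots,(\alpha_{h-1},c_h))$, $\alpha_0=\alpha$, $\alpha_{i}=\alpha_{i-1}\cdot c_{i}$. A node $(\alpha,c)$ is positive if there exists $x\in\mathcal M_\alpha$ with $C_1(xy)=c$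 for all $y\in\mathcal M_{\alpha\cdot x}$; it is null otherwise. *)

theory Defs
  imports Main
begin

text \<open>Trace monoid M(Sg, I): traces are represented by words over Sg
  modulo the congruence generated by commuting adjacent independent letters.\<close>

definition indep_rel :: "'a set \<Rightarrow> ('a \<times> 'a) set \<Rightarrow> bool" where
  "indep_rel Sg I \<longleftrightarrow> I \<subseteq> Sg \<times> Sg \<and> irrefl I \<and> sym I"

definition swap1 :: "('a \<times> 'a) set \<Rightarrow> 'a list \<Rightarrow> 'a list \<Rightarrow> bool" where
  "swap1 I u v \<longleftrightarrow> (\<exists>p q a b. (a, b) \<in> I \<and> u = p @ [a, b] @ q \<and> v = p @ [b, a] @ q)"

definition teq :: "('a \<times> 'a) set \<Rightarrow> 'a list \<Rightarrow> 'a list \<Rightarrow> bool" where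
  "teq I = (swap1 I)\<^sup>*\<^sup>*"

definition is_clique :: "'a set \<Rightarrow> ('a \<times> 'a) set \<Rightarrow> 'a set \<Rightarrow> bool" where
  "is_clique Sg I c \<longleftrightarrow> c \<noteq> {} \<and> c \<subseteq> Sg \<and> (\<forall>a\<in>c. \<forall>b\<in>c. a \<noteq> b \<longrightarrow> (a, b) \<in> I)"

text \<open>A word representing the clique c as a trace (any enumeration; all are trace-equivalent).\<close>
definition cword :: "'a set \<Rightarrow> 'a list" where
  "cword c = (SOME w. distinct w \<and> set w = c)"

definition arrow :: "('a \<times> 'a) set \<Rightarrow> 'a set \<Rightarrow> 'a set \<Rightarrow> bool" where
  "arrow I c d \<longleftrightarrow> (\<forall>b\<in>d. \<exists>a\<in>c. (a, b) \<notin> I)"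

definition is_nf :: "'a set \<Rightarrow> ('a \<times> 'a) set \<Rightarrow> 'a set list \<Rightarrow> 'a list \<Rightarrow> bool" where
  "is_nf Sg I cs w \<longleftrightarrow> (\<forall>c\<in>set cs. is_clique Sg I c) \<and> successively (arrow I) cs
     \<and> teq I (concat (map cword cs)) w"

text \<open>The (unique) normal form c_1 ... c_h of a trace; height = h, C_1 = first clique.\<close>
definition nf :: "'a set \<Rightarrow> ('a \<times> 'a) set \<Rightarrow> 'a list \<Rightarrow> 'a set list" where
  "nf Sg I w = (THE cs. is_nf Sg I cs w)"

definition height :: "'a set \<Rightarrow> ('a \<times> 'a) set \<Rightarrow> 'a list \<Rightarrow> nat" where
  "height Sg I w = length (nf Sg I w)"

text \<open>Right action on X \<union> {\<bottom>}, with \<bottom> = None, generated by the letter action delta.\<close>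
fun act :: "('s \<Rightarrow> 'a \<Rightarrow> 's option) \<Rightarrow> 's option \<Rightarrow> 'a list \<Rightarrow> 's option" where
  "act delta s [] = s"
| "act delta None (a # w) = None"
| "act delta (Some s) (a # w) = act delta (delta s a) w"

definition conc_system :: "'a set \<Rightarrow> ('a \<times> 'a) set \<Rightarrow> 's set \<Rightarrow> ('s \<Rightarrow> 'a \<Rightarrow> 's option) \<Rightarrow> bool" where
  "conc_system Sg I X delta \<longleftrightarrow> finite Sg \<and> indep_rel Sg I \<and> finite X
     \<and> (\<forall>s\<in>X. \<forall>a\<in>Sg. delta s a = None \<or> the (delta s a) \<in> X)
     \<and> (\<forall>s\<in>X. \<forall>(a, b)\<in>I. act delta (Some s) [a, b] = act delta (Some s) [b, a])"

text \<open>M_alpha (as a set of words; it is closed under trace equivalence).\<close>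
definition Mst :: "'a set \<Rightarrow> ('s \<Rightarrow> 'a \<Rightarrow> 's option) \<Rightarrow> 's option \<Rightarrow> 'a list set" where
  "Mst Sg delta s = {w. set w \<subseteq> Sg \<and> act delta s w \<noteq> None}"

definition cliques_at :: "'a set \<Rightarrow> ('a \<times> 'a) set \<Rightarrow> ('s \<Rightarrow> 'a \<Rightarrow> 's option) \<Rightarrow> 's \<Rightarrow> 'a set set" where
  "cliques_at Sg I delta \<alpha> = {c. is_clique Sg I c \<and> act delta (Some \<alpha>) (cword c) \<noteq> None}"

definition dsc_node :: "'a set \<Rightarrow> ('a \<times> 'a) set \<Rightarrow> ('s \<Rightarrow> 'a \<Rightarrow> 's option) \<Rightarrow> 's \<Rightarrow> 'a set \<Rightarrow> bool" where
  "dsc_node Sg I delta \<alpha> c \<longleftrightarrow> c \<in> cliques_at Sg I delta \<alpha>"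

definition dsc_arc :: "'a set \<Rightarrow> ('a \<times> 'a) set \<Rightarrow> ('s \<Rightarrow> 'a \<Rightarrow> 's option) \<Rightarrow> 's \<Rightarrow> 'a set \<Rightarrow> 's \<Rightarrow> 'a set \<Rightarrow> bool" where
  "dsc_arc Sg I delta \<alpha> c \<beta> d \<longleftrightarrow> dsc_node Sg I delta \<alpha> c \<and> dsc_node Sg I delta \<beta> d
     \<and> act delta (Some \<alpha>) (cword c) = Some \<beta> \<and> arrow I c d"

definition positive_node :: "'a set \<Rightarrow> ('a \<times> 'a) set \<Rightarrow> ('s \<Rightarrow> 'a \<Rightarrow> 's option) \<Rightarrow> 's \<Rightarrow> 'a set \<Rightarrow> bool" where
  "positive_node Sg I delta \<alpha> c \<longleftrightarrow> dsc_node Sg I delta \<alpha> c \<and>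
     (\<exists>x\<in>Mst Sg delta (Some \<alpha>). \<forall>y\<in>Mst Sg delta (act delta (Some \<alpha>) x).
        nf Sg I (x @ y) \<noteq> [] \<and> hd (nf Sg I (x @ y)) = c)"

definition null_node :: "'a set \<Rightarrow> ('a \<times> 'a) set \<Rightarrow> ('s \<Rightarrow> 'a \<Rightarrow> 's option) \<Rightarrow> 's \<Rightarrow> 'a set \<Rightarrow> bool" where
  "null_node Sg I delta \<alpha> c \<longleftrightarrow> dsc_node Sg I delta \<alpha> c \<and> \<not> positive_node Sg I delta \<alpha> c"

end

theory Submission
  imports Defs
begin

(*
  The normal form of a trace can be computed letter by letter: a new letter goes into the layer
  right after the last layer containing a letter it depends on (Cartier-Foata insertion).
  Insertions of independent letters commute, so this defines a function on traces; it returns a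
  normal form, which is therefore unique, and it shows how the first clique and the height evolve
  under right multiplication.

  (1) Appending letters to a maximal clique c only enlarges the first layer, which stays a clique
  executable from alpha, so it stays c.
  (2) If c -> c' and the first clique of x'y is always c', then c followed by the normal form of
  x'y is the normal form of c x'y.
  (3) Extend x to xy of maximal length without increasing the height (lengths are bounded by
  height times |Sigma|). Then no letter can join the last clique, so that clique is maximal at its
  state and its node is positive by (1); going back along the arcs of the path, (2) makes every
  node positive.
  (4) If x contains every letter, each later letter depends on a letter already placed, so it never
  reaches the first layer and x witnesses that (alpha, C_1(x)) is positive.
*)

lemma act_None [simp]: "act delta None w = None"
  by (cases w) auto

lemma act_append: "act delta s (u @ v) = act delta (act delta s u) v"
  by (induction delta s u rule: act.induct) auto

lemma Mst_append_iff:
  "u @ v \<in> Mst Sg delta s \<longleftrightarrow> u \<in> Mst Sg delta s \<and> v \<in> Mst Sg delta (act delta s u)"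
  by (cases "act delta s u") (auto simp: Mst_def act_append)

lemma Mst_subset_Sg: "w \<in> Mst Sg delta s \<Longrightarrow> set w \<subseteq> Sg"
  by (simp add: Mst_def)

section \<open>Trace equivalence\<close>

lemma teq_refl [simp]: "teq I u u"
  by (simp add: teq_def)

lemma teq_trans [trans]: "teq I u v \<Longrightarrow> teq I v w \<Longrightarrow> teq I u w"
  unfolding teq_def by (rule rtranclp_trans)

lemma teq_sym:
  assumes "sym I" and "teq I u v"
  shows "teq I v u"
  using assms(2) unfolding teq_def
proof (induction rule: rtranclp_induct)
  case (step v w)
  have "swap1 I w v"
    using step.hyps(2) \<open>sym I\<close> unfolding swap1_def sym_def by blast
  then show ?case
    using step.IH by (rule converse_rtranclp_into_rtranclp)
qed simp

lemma teq_append_cong: "teq I u v \<Longrightarrow> teq I (p @ u @ q) (p @ v @ q)"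
  unfolding teq_def
proof (induction rule: rtranclp_induct)
  case (step v w)
  then obtain p' q' a b where "(a, b) \<in> I" "v = p' @ [a, b] @ q'" "w = p' @ [b, a] @ q'"
    unfolding swap1_def by blast
  moreover have "swap1 I ((p @ p') @ [a, b] @ (q' @ q)) ((p @ p') @ [b, a] @ (q' @ q))"
    using \<open>(a, b) \<in> I\<close> unfolding swap1_def by blast
  ultimately show ?case
    using step.IH by simp
qed simp

lemma teq_append_left: "teq I u v \<Longrightarrow> teq I (p @ u) (p @ v)"
  using teq_append_cong[of I u v p "[]"] by simp

lemma teq_append_right: "teq I u v \<Longrightarrow> teq I (u @ q) (v @ q)"
  using teq_append_cong[of I u v "[]" q] by simp

lemma teq_swap: "(a, b) \<in> I \<Longrightarrow> teq I (a # b # q) (b # a # q)"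
  unfolding teq_def swap1_def by (rule r_into_rtranclp, rule exI[of _ "[]"], rule exI[of _ q]) auto

lemma teq_invariant:
  assumes "teq I u v" and "\<And>p a b q. (a, b) \<in> I \<Longrightarrow> f (p @ a # b # q) = f (p @ b # a # q)"
  shows "f u = f v"
  using assms(1) unfolding teq_def
proof (induction rule: rtranclp_induct)
  case (step v w)
  then show ?case
    unfolding swap1_def using assms(2) by (metis append_Cons append_Nil)
qed simp

lemma teq_set: "teq I u v \<Longrightarrow> set u = set v"
  by (erule teq_invariant) auto

lemma teq_length: "teq I u v \<Longrightarrow> length u = length v"
  by (erule teq_invariant) auto

lemma teq_snoc_independent: "\<forall>b\<in>set u. (b, a) \<in> I \<Longrightarrow> teq I (u @ [a]) (a # u)"
proof (induction u)
  case (Cons b u)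
  then have "teq I (u @ [a]) (a # u)" and "(b, a) \<in> I"
    by auto
  have "teq I (b # u @ [a]) (b # a # u)"
    using teq_append_left[OF \<open>teq I (u @ [a]) (a # u)\<close>, of "[b]"] by simp
  also have "teq I (b # a # u) (a # b # u)"
    using \<open>(b, a) \<in> I\<close> by (rule teq_swap)
  finally show ?case
    by simp
qed simp

lemma teq_independent_perm:
  assumes "sym I" "distinct u" "distinct v" "set u = set v"
    and "\<forall>a\<in>set u. \<forall>b\<in>set u. a \<noteq> b \<longrightarrow> (a, b) \<in> I"
  shows "teq I u v"
  using assms(2-)
proof (induction u arbitrary: v)
  case (Cons a u)
  have "a \<in> set v"
    using Cons.prems(3) by auto
  then obtain v1 v2 where v: "v = v1 @ a # v2"
    by (meson split_list)
  have "a \<notin> set v1" "a \<notin> set v2" "distinct (v1 @ v2)"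
    using Cons.prems(2) v by auto
  then have "set u = set (v1 @ v2)"
    using Cons.prems(1,3) v by auto
  then have "teq I u (v1 @ v2)"
    using Cons.prems(1,4) \<open>distinct (v1 @ v2)\<close> by (intro Cons.IH) auto
  then have "teq I (a # u) (a # v1 @ v2)"
    using teq_append_left[of I u "v1 @ v2" "[a]"] by simp
  also have "teq I (a # v1 @ v2) (v1 @ a # v2)"
  proof -
    have "\<forall>b\<in>set v1. (b, a) \<in> I"
      using Cons.prems(3,4) v \<open>sym I\<close> \<open>a \<notin> set v1\<close> by (auto simp: sym_def)
    then have "teq I (a # v1) (v1 @ [a])"
      by (rule teq_sym[OF \<open>sym I\<close> teq_snoc_independent])
    then show ?thesis
      using teq_append_right[of I "a # v1" "v1 @ [a]" v2] by simp
  qed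
  finally show ?case
    using v by simp
qed simp

lemma
  assumes "finite c"
  shows distinct_cword: "distinct (cword c)" and set_cword [simp]: "set (cword c) = c"
proof -
  have "\<exists>w. distinct w \<and> set w = c"
    using finite_distinct_list[OF assms] by blast
  then have "distinct (cword c) \<and> set (cword c) = c"
    unfolding cword_def by (rule someI_ex)
  then show "distinct (cword c)" "set (cword c) = c"
    by auto
qed

lemma cword_singleton [simp]: "cword {a} = [a]"
  using distinct_cword[of "{a}"] set_cword[of "{a}"]
  by (cases "cword {a}") (auto simp: subset_singleton_iff)

lemma is_clique_subset: "is_clique Sg I e \<Longrightarrow> c \<subseteq> e \<Longrightarrow> c \<noteq> {} \<Longrightarrow> is_clique Sg I c"
  by (auto simp: is_clique_def)

section \<open>The Cartier-Foata normal form\<close>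

definition depends_on :: "('a \<times> 'a) set \<Rightarrow> 'a \<Rightarrow> 'a set \<Rightarrow> bool" where
  "depends_on I a c \<longleftrightarrow> (\<exists>b\<in>c. (b, a) \<notin> I)"

definition layer :: "'a set list \<Rightarrow> nat \<Rightarrow> 'a set" where
  "layer cs i = (if i < length cs then cs ! i else {})"

definition level :: "('a \<times> 'a) set \<Rightarrow> 'a set list \<Rightarrow> 'a \<Rightarrow> nat" where
  "level I cs a = (LEAST k. \<forall>i\<ge>k. \<not> depends_on I a (layer cs i))"

definition foata_ins :: "('a \<times> 'a) set \<Rightarrow> 'a set list \<Rightarrow> 'a \<Rightarrow> 'a set list" where
  "foata_ins I cs a =
    (if level I cs a < length cs then cs[level I cs a := insert a (cs ! level I cs a)]
     else cs @ [{a}])"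

definition foata :: "('a \<times> 'a) set \<Rightarrow> 'a list \<Rightarrow> 'a set list" where
  "foata I w = foldl (foata_ins I) [] w"

lemma not_depends_on_empty [simp]: "\<not> depends_on I a {}"
  by (simp add: depends_on_def)

lemma depends_on_mono: "depends_on I a c \<Longrightarrow> c \<subseteq> d \<Longrightarrow> depends_on I a d"
  by (auto simp: depends_on_def)

lemma arrow_iff_depends_on: "arrow I c d \<longleftrightarrow> (\<forall>b\<in>d. depends_on I b c)"
  by (auto simp: arrow_def depends_on_def)

lemma layer_nth: "i < length cs \<Longrightarrow> layer cs i = cs ! i"
  by (simp add: layer_def)

lemma Union_set_eq_layers: "\<Union>(set cs) = (\<Union>i. layer cs i)"
  by (auto simp: layer_def in_set_conv_nth split: if_splits) (metis nth_mem)

lemma list_eq_layersI: "length cs = length ds \<Longrightarrow> (\<And>i. layer cs i = layer ds i) \<Longrightarrow> cs = ds"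
  by (metis layer_def nth_equalityI)

lemma level_le_length: "level I cs a \<le> length cs"
  unfolding level_def by (rule Least_le) (simp add: layer_def)

lemma not_depends_on_layer_ge_level:
  assumes "level I cs a \<le> i"
  shows "\<not> depends_on I a (layer cs i)"
proof -
  have "\<forall>i\<ge>level I cs a. \<not> depends_on I a (layer cs i)"
    unfolding level_def by (rule LeastI[of _ "length cs"]) (simp add: layer_def)
  with assms show ?thesis
    by blast
qed

lemma depends_on_layer_below_level:
  assumes "0 < level I cs a"
  shows "depends_on I a (layer cs (level I cs a - 1))"
proof -
  have "\<not> (\<forall>i\<ge>level I cs a - 1. \<not> depends_on I a (layer cs i))"
    using assms unfolding level_def by (intro not_less_Least) simp
  then obtain i where "level I cs a - 1 \<le> i" "depends_on I a (layer cs i)"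
    by blast
  moreover have "\<not> level I cs a \<le> i"
    using not_depends_on_layer_ge_level[of I cs a i] \<open>depends_on I a (layer cs i)\<close> by blast
  ultimately have "i = level I cs a - 1"
    by linarith
  with \<open>depends_on I a (layer cs i)\<close> show ?thesis
    by simp
qed

lemma level_eqI:
  assumes "\<And>i. k \<le> i \<Longrightarrow> \<not> depends_on I a (layer cs i)"
    and "0 < k \<Longrightarrow> depends_on I a (layer cs (k - 1))"
  shows "level I cs a = k"
  unfolding level_def
proof (rule Least_equality)
  fix l assume l: "\<forall>i\<ge>l. \<not> depends_on I a (layer cs i)"
  show "k \<le> l"
  proof (rule ccontr)
    assume "\<not> k \<le> l"
    then have "0 < k" "l \<le> k - 1"
      by auto
    with l assms(2) show False
      by blast
  qed
qed (use assms(1) in blast)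

lemma length_foata_ins: "length (foata_ins I cs a) = max (length cs) (Suc (level I cs a))"
  using level_le_length[of I cs a] by (auto simp: foata_ins_def)

lemma foata_ins_ne: "foata_ins I cs a \<noteq> []"
  using length_foata_ins[of I cs a] by auto

lemma layer_foata_ins:
  "layer (foata_ins I cs a) i = (if i = level I cs a then insert a (layer cs i) else layer cs i)"
  using level_le_length[of I cs a] by (auto simp: foata_ins_def layer_def nth_append)

lemma level_foata_ins_independent:
  assumes "(a, b) \<in> I"
  shows "level I (foata_ins I cs a) b = level I cs b"
proof -
  have "depends_on I b (layer (foata_ins I cs a) i) \<longleftrightarrow> depends_on I b (layer cs i)" for i
    using assms by (auto simp: layer_foata_ins depends_on_def)
  then show ?thesis
    by (simp add: level_def)
qed

lemma foata_ins_commute: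
  assumes "(a, b) \<in> I" "(b, a) \<in> I"
  shows "foata_ins I (foata_ins I cs a) b = foata_ins I (foata_ins I cs b) a"
  by (rule list_eq_layersI)
    (auto simp: length_foata_ins layer_foata_ins level_foata_ins_independent assms)

lemma foata_append: "foata I (u @ v) = foldl (foata_ins I) (foata I u) v"
  by (simp add: foata_def)

lemma foata_teq: "sym I \<Longrightarrow> teq I u v \<Longrightarrow> foata I u = foata I v"
  by (erule teq_invariant) (simp add: foata_append foata_ins_commute sym_def)

lemma Union_set_foata_ins: "\<Union>(set (foata_ins I cs a)) = insert a (\<Union>(set cs))"
  unfolding Union_set_eq_layers layer_foata_ins by (auto split: if_splits) metis

lemma Union_set_foata: "\<Union>(set (foata I w)) = set w"
  by (induction w rule: rev_induct) (simp_all add: foata_def Union_set_foata_ins)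

lemma length_foata_ins_independent_last:
  assumes "cs \<noteq> []" and "\<forall>b\<in>last cs. (b, a) \<in> I"
  shows "length (foata_ins I cs a) = length cs"
proof -
  have "\<not> depends_on I a (layer cs (length cs - 1))"
    using assms by (simp add: layer_nth last_conv_nth depends_on_def)
  then have "level I cs a \<noteq> length cs"
    using depends_on_layer_below_level[of I cs a] assms(1) by auto
  then show ?thesis
    using level_le_length[of I cs a] by (simp add: length_foata_ins)
qed

lemma successively_arrow_foata_ins:
  assumes "successively (arrow I) cs"
  shows "successively (arrow I) (foata_ins I cs a)"
  unfolding successively_conv_nth
proof (intro allI impI)
  fix i assume i: "Suc i < length (foata_ins I cs a)"
  have "depends_on I b (layer (foata_ins I cs a) i)" if b: "b \<in> layer (foata_ins I cs a) (Suc i)" for b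
  proof -
    have "depends_on I b (layer cs i)"
    proof (cases "b = a \<and> Suc i = level I cs a")
      case True
      then have "i = level I cs a - 1" "0 < level I cs a" "b = a"
        by auto
      then show ?thesis
        using depends_on_layer_below_level[of I cs a] by simp
    next
      case False
      then have "b \<in> layer cs (Suc i)"
        using b by (auto simp: layer_foata_ins split: if_splits)
      then have "Suc i < length cs"
        by (auto simp: layer_def split: if_splits)
      with assms \<open>b \<in> layer cs (Suc i)\<close> show ?thesis
        by (simp add: successively_conv_nth arrow_iff_depends_on layer_nth)
    qed
    then show ?thesis
      by (rule depends_on_mono) (auto simp: layer_foata_ins)
  qed
  with i show "arrow I (foata_ins I cs a ! i) (foata_ins I cs a ! Suc i)"
    by (simp add: arrow_iff_depends_on layer_nth[symmetric])
qed

lemma hd_foldl_foata_ins_mono: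
  "cs \<noteq> [] \<Longrightarrow> foldl (foata_ins I) cs y \<noteq> [] \<and> hd cs \<subseteq> hd (foldl (foata_ins I) cs y)"
proof (induction y arbitrary: cs)
  case (Cons a y)
  have "hd cs \<subseteq> hd (foata_ins I cs a)"
    using Cons.prems foata_ins_ne[of I cs a]
    by (auto simp: hd_conv_nth layer_nth[symmetric] layer_foata_ins)
  moreover have "foldl (foata_ins I) (foata_ins I cs a) y \<noteq> [] \<and>
      hd (foata_ins I cs a) \<subseteq> hd (foldl (foata_ins I) (foata_ins I cs a) y)"
    by (rule Cons.IH[OF foata_ins_ne])
  ultimately show ?case
    by auto
qed simp

text \<open>A letter that occurs in some layer depends on that layer, so it never enters the first one.\<close>
lemma hd_foldl_foata_ins_eq:
  "irrefl I \<Longrightarrow> cs \<noteq> [] \<Longrightarrow> set y \<subseteq> \<Union>(set cs) \<Longrightarrow> hd (foldl (foata_ins I) cs y) = hd cs"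
proof (induction y arbitrary: cs)
  case (Cons b y)
  then obtain i where i: "b \<in> layer cs i"
    unfolding Union_set_eq_layers by auto
  with Cons.prems(1) have "depends_on I b (layer cs i)"
    by (auto simp: depends_on_def irrefl_def)
  then have "0 < level I cs b"
    using not_depends_on_layer_ge_level[of I cs b i] by (cases "level I cs b") auto
  then have "hd (foata_ins I cs b) = hd cs"
    using Cons.prems(2) foata_ins_ne[of I cs b]
    by (simp add: hd_conv_nth layer_nth[symmetric] layer_foata_ins)
  moreover have "set y \<subseteq> \<Union>(set (foata_ins I cs b))"
    using Cons.prems(3) by (auto simp: Union_set_foata_ins)
  ultimately show ?case
    using Cons.IH[OF Cons.prems(1) foata_ins_ne[of I cs b]] by simp
qed simp

lemma level_after_dependent_layer:
  assumes "cs \<noteq> [] \<Longrightarrow> depends_on I b (last cs)" and "\<not> depends_on I b d"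
  shows "level I (cs @ [d]) b = length cs"
proof (rule level_eqI)
  fix i assume "length cs \<le> i"
  then show "\<not> depends_on I b (layer (cs @ [d]) i)"
    using assms(2) by (cases "i = length cs") (auto simp: layer_def nth_append)
next
  assume "0 < length cs"
  then show "depends_on I b (layer (cs @ [d]) (length cs - 1))"
    using assms(1) by (auto simp: layer_def nth_append last_conv_nth)
qed

lemma level_after_dependent:
  assumes "cs \<noteq> [] \<Longrightarrow> depends_on I b (last cs)"
  shows "level I cs b = length cs"
proof (rule level_eqI)
  assume "0 < length cs"
  then show "depends_on I b (layer cs (length cs - 1))"
    using assms by (auto simp: layer_def last_conv_nth)
qed (simp add: layer_def)

lemma foldl_foata_ins_clique:
  assumes "is_clique Sg I c" and "cs \<noteq> [] \<Longrightarrow> arrow I (last cs) c"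
  shows "distinct u \<Longrightarrow> u \<noteq> [] \<Longrightarrow> set u \<subseteq> c \<Longrightarrow> foldl (foata_ins I) cs u = cs @ [set u]"
proof (induction u rule: rev_induct)
  case (snoc b u)
  have dep_last: "cs \<noteq> [] \<Longrightarrow> depends_on I b (last cs)"
    using assms(2) snoc.prems(3) by (auto simp: arrow_iff_depends_on)
  show ?case
  proof (cases "u = []")
    case True
    have "level I cs b = length cs"
      by (rule level_after_dependent[OF dep_last])
    with True show ?thesis
      by (simp add: foata_ins_def)
  next
    case False
    have "(x, b) \<in> I" if "x \<in> set u" for x
    proof -
      have "x \<in> c" "b \<in> c" "x \<noteq> b"
        using that snoc.prems by auto
      with assms(1) show ?thesis
        unfolding is_clique_def by blast
    qed
    then have "\<not> depends_on I b (set u)"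
      by (auto simp: depends_on_def)
    then have "level I (cs @ [set u]) b = length cs"
      using level_after_dependent_layer[OF dep_last, of "set u"] by simp
    with False snoc show ?thesis
      by (simp add: foata_ins_def)
  qed
qed simp

locale trace_alphabet =
  fixes Sg :: "'a set" and I :: "('a \<times> 'a) set"
  assumes finite_Sg: "finite Sg" and irrefl_I: "irrefl I" and sym_I: "sym I"
begin

lemma clique_finite: "is_clique Sg I c \<Longrightarrow> finite c"
  using finite_Sg by (auto simp: is_clique_def intro: finite_subset)

lemma set_cword_clique [simp]: "is_clique Sg I c \<Longrightarrow> set (cword c) = c"
  by (simp add: clique_finite)

lemma teq_cword_union:
  assumes "is_clique Sg I (c \<union> d)" and "c \<inter> d = {}"
  shows "teq I (cword (c \<union> d)) (cword c @ cword d)"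
proof -
  have "finite c" "finite d"
    using clique_finite[OF assms(1)] by auto
  with assms show ?thesis
    by (intro teq_independent_perm[OF sym_I]) (auto simp: distinct_cword is_clique_def)
qed

lemma foata_ins_cliques:
  assumes "\<forall>c\<in>set cs. is_clique Sg I c" and "a \<in> Sg"
  shows "\<forall>c\<in>set (foata_ins I cs a). is_clique Sg I c"
proof
  fix c assume "c \<in> set (foata_ins I cs a)"
  then obtain i where i: "i < length (foata_ins I cs a)" "c = layer (foata_ins I cs a) i"
    by (metis in_set_conv_nth layer_nth)
  have layer_clique: "layer cs i = {} \<or> is_clique Sg I (layer cs i)"
    using assms(1) by (auto simp: layer_def)
  show "is_clique Sg I c"
  proof (cases "i = level I cs a")
    case True
    then have "\<forall>b\<in>layer cs i. (b, a) \<in> I \<and> (a, b) \<in> I"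
      using not_depends_on_layer_ge_level[of I cs a i] sym_I
      by (auto simp: depends_on_def sym_def)
    with True i layer_clique assms(2) show ?thesis
      unfolding is_clique_def by (auto simp: layer_foata_ins)
  next
    case False
    then have "i < length cs"
      using i level_le_length[of I cs a] by (simp add: length_foata_ins)
    with False i assms(1) show ?thesis
      by (simp add: layer_foata_ins layer_nth)
  qed
qed

lemma independent_above_level:
  assumes cliques: "\<forall>c\<in>set cs. is_clique Sg I c"
    and "b \<in> set (concat (map cword (drop (Suc (level I cs a)) cs)))"
  shows "(b, a) \<in> I"
proof -
  obtain d where d: "d \<in> set (drop (Suc (level I cs a)) cs)" "b \<in> set (cword d)"
    using assms(2) by auto
  then have "b \<in> d"
    using cliques by (auto dest: in_set_dropD)
  obtain j where "j < length cs - Suc (level I cs a)" "d = cs ! (Suc (level I cs a) + j)"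
    using d(1) by (auto simp: in_set_conv_nth)
  then have "b \<in> layer cs (Suc (level I cs a) + j)"
    using \<open>b \<in> d\<close> by (simp add: layer_nth)
  moreover have "\<not> depends_on I a (layer cs (Suc (level I cs a) + j))"
    by (rule not_depends_on_layer_ge_level) simp
  ultimately show ?thesis
    by (auto simp: depends_on_def)
qed

lemma teq_concat_foata_ins:
  assumes cliques: "\<forall>c\<in>set cs. is_clique Sg I c" and "a \<in> Sg"
  shows "teq I (concat (map cword (foata_ins I cs a))) (concat (map cword cs) @ [a])"
proof (cases "level I cs a < length cs")
  case True
  define k where "k = level I cs a"
  define c where "c = cs ! k"
  define P where "P = concat (map cword (take k cs))"
  define R where "R = concat (map cword (drop (Suc k) cs))"
  have k: "k < length cs"
    using True k_def by simp
  have cs: "concat (map cword cs) = P @ cword c @ R"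
    unfolding P_def R_def c_def by (metis concat.simps(2) concat_append id_take_nth_drop[OF k] list.map(2) map_append)
  have ins: "concat (map cword (foata_ins I cs a)) = P @ cword (insert a c) @ R"
    using k by (simp add: foata_ins_def k_def[symmetric] c_def P_def R_def upd_conv_take_nth_drop)
  have "insert a c \<in> set (foata_ins I cs a)"
    using True by (simp add: foata_ins_def k_def[symmetric] c_def k set_update_memI)
  then have "is_clique Sg I (c \<union> {a})"
    using foata_ins_cliques[OF assms] by simp
  moreover have "a \<notin> c"
    using not_depends_on_layer_ge_level[of I cs a k] irrefl_I k
    by (auto simp: k_def c_def layer_nth depends_on_def irrefl_def)
  ultimately have "teq I (cword (insert a c)) (cword c @ [a])"
    using teq_cword_union[of c "{a}"] by simp
  then have "teq I (P @ cword (insert a c) @ R) (P @ (cword c @ [a]) @ R)"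
    by (rule teq_append_cong)
  also have "teq I (P @ (cword c @ [a]) @ R) (P @ cword c @ R @ [a])"
  proof -
    have "\<forall>b\<in>set R. (b, a) \<in> I"
      using independent_above_level[OF cliques] by (simp add: R_def k_def)
    then have "teq I (a # R) (R @ [a])"
      by (simp add: teq_sym[OF sym_I] teq_snoc_independent)
    then show ?thesis
      using teq_append_cong[of I "a # R" "R @ [a]" "P @ cword c" "[]"] by simp
  qed
  finally show ?thesis
    using cs ins by simp
qed (simp add: foata_ins_def)

lemma foata_is_nf: "set w \<subseteq> Sg \<Longrightarrow> is_nf Sg I (foata I w) w"
proof (induction w rule: rev_induct)
  case (snoc a w)
  have "set w \<subseteq> Sg" and a: "a \<in> Sg"
    using snoc.prems by auto
  with snoc.IH have IH: "is_nf Sg I (foata I w) w"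
    by blast
  have "teq I (concat (map cword (foata_ins I (foata I w) a))) (concat (map cword (foata I w)) @ [a])"
    using teq_concat_foata_ins a IH by (simp add: is_nf_def)
  also have "teq I \<dots> (w @ [a])"
    using IH teq_append_right unfolding is_nf_def by blast
  finally have "teq I (concat (map cword (foata_ins I (foata I w) a))) (w @ [a])" .
  moreover have "\<forall>c\<in>set (foata_ins I (foata I w) a). is_clique Sg I c"
    using IH a by (intro foata_ins_cliques) (simp_all add: is_nf_def)
  moreover have "successively (arrow I) (foata_ins I (foata I w) a)"
    using IH by (simp add: is_nf_def successively_arrow_foata_ins)
  ultimately show ?case
    by (simp add: is_nf_def foata_append)
qed (simp add: foata_def is_nf_def)

lemma foata_concat_cword:
  "\<forall>c\<in>set cs. is_clique Sg I c \<Longrightarrow> successively (arrow I) cs \<Longrightarrow> foata I (concat (map cword cs)) = cs"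
proof (induction cs rule: rev_induct)
  case (snoc c cs)
  then have c: "is_clique Sg I c" and "cs \<noteq> [] \<Longrightarrow> arrow I (last cs) c"
    by (auto simp: successively_append_iff)
  moreover have "distinct (cword c)"
    using c by (simp add: distinct_cword clique_finite)
  moreover have "cword c \<noteq> []"
  proof
    assume "cword c = []"
    then have "c = {}"
      using set_cword_clique[OF c] by simp
    with c show False
      by (simp add: is_clique_def)
  qed
  ultimately have "foldl (foata_ins I) cs (cword c) = cs @ [set (cword c)]"
    by (intro foldl_foata_ins_clique) auto
  with snoc show ?case
    by (simp add: foata_append successively_append_iff)
qed (simp add: foata_def)

lemma nf_eqI:
  assumes "is_nf Sg I cs w"
  shows "nf Sg I w = cs"
proof -
  have "cs' = foata I w" if "is_nf Sg I cs' w" for cs'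
  proof -
    have "cs' = foata I (concat (map cword cs'))"
      using that foata_concat_cword by (simp add: is_nf_def)
    also have "\<dots> = foata I w"
      using that foata_teq[OF sym_I] by (simp add: is_nf_def)
    finally show ?thesis .
  qed
  with assms show ?thesis
    unfolding nf_def by (metis the_equality)
qed

lemma nf_eq_foata: "set w \<subseteq> Sg \<Longrightarrow> nf Sg I w = foata I w"
  by (rule nf_eqI[OF foata_is_nf])

lemma nf_is_nf: "set w \<subseteq> Sg \<Longrightarrow> is_nf Sg I (nf Sg I w) w"
  using foata_is_nf nf_eq_foata by simp

lemma teq_concat_cword_nf: "set w \<subseteq> Sg \<Longrightarrow> teq I (concat (map cword (nf Sg I w))) w"
  using nf_is_nf by (simp add: is_nf_def)

lemma nf_append: "set (u @ v) \<subseteq> Sg \<Longrightarrow> nf Sg I (u @ v) = foldl (foata_ins I) (nf Sg I u) v"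
  by (simp add: nf_eq_foata foata_append)

lemma nf_cword: "is_clique Sg I c \<Longrightarrow> nf Sg I (cword c) = [c]"
  by (rule nf_eqI) (simp add: is_nf_def)

lemma nf_cword_append:
  assumes "is_clique Sg I c" "set z \<subseteq> Sg" "nf Sg I z \<noteq> []" "arrow I c (hd (nf Sg I z))"
  shows "nf Sg I (cword c @ z) = c # nf Sg I z"
proof (rule nf_eqI)
  from assms nf_is_nf[OF assms(2)] show "is_nf Sg I (c # nf Sg I z) (cword c @ z)"
    by (auto simp: is_nf_def successively_Cons teq_append_left)
qed

lemma length_le_height_mult_card:
  assumes "set w \<subseteq> Sg"
  shows "length w \<le> height Sg I w * card Sg"
proof -
  have nf: "is_nf Sg I (nf Sg I w) w"
    by (rule nf_is_nf[OF assms])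
  have clique_length: "length (cword c) \<le> card Sg" if "c \<in> set (nf Sg I w)" for c
  proof -
    have "is_clique Sg I c"
      using nf that by (simp add: is_nf_def)
    then have "length (cword c) = card c" "card c \<le> card Sg"
      using finite_Sg by (auto simp: clique_finite distinct_cword distinct_card[symmetric] intro: card_mono simp: is_clique_def)
    then show ?thesis
      by simp
  qed
  have "length w = length (concat (map cword (nf Sg I w)))"
    using nf teq_length[of I "concat (map cword (nf Sg I w))" w] by (simp add: is_nf_def)
  also have "\<dots> = (\<Sum>c\<leftarrow>nf Sg I w. length (cword c))"
    by (simp add: length_concat comp_def)
  also have "\<dots> \<le> (\<Sum>c\<leftarrow>nf Sg I w. card Sg)"
    by (rule sum_list_mono) (rule clique_length)
  also have "\<dots> = height Sg I w * card Sg"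
    by (simp add: height_def sum_list_triv)
  finally show ?thesis .
qed

end

section \<open>Positive nodes of the digraph of states and cliques\<close>

definition path_state :: "('s \<Rightarrow> 'a \<Rightarrow> 's option) \<Rightarrow> 's \<Rightarrow> 'a set list \<Rightarrow> nat \<Rightarrow> 's" where
  "path_state delta \<alpha> cs i = the (act delta (Some \<alpha>) (concat (map cword (take i cs))))"

locale concurrent_system =
  fixes Sg :: "'a set" and I :: "('a \<times> 'a) set" and X :: "'s set"
    and delta :: "'s \<Rightarrow> 'a \<Rightarrow> 's option"
  assumes conc_system: "conc_system Sg I X delta"

sublocale concurrent_system \<subseteq> trace_alphabet Sg I
  using conc_system by unfold_locales (auto simp: conc_system_def indep_rel_def)

context concurrent_system
begin

lemma act_in_X: "s \<in> X \<Longrightarrow> set w \<subseteq> Sg \<Longrightarrow> act delta (Some s) w = Some t \<Longrightarrow> t \<in> X"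
proof (induction w arbitrary: s)
  case (Cons a w)
  then obtain s' where "delta s a = Some s'"
    by (cases "delta s a") auto
  moreover from this have "s' \<in> X"
    using conc_system Cons.prems(1,2) unfolding conc_system_def by force
  ultimately show ?case
    using Cons by simp
qed simp

lemma act_teq:
  assumes "s \<in> X" "set u \<subseteq> Sg" "teq I u v"
  shows "act delta (Some s) u = act delta (Some s) v"
proof -
  \<comment> \<open>The commutation hypothesis only concerns letters of \<open>Sg\<close>, hence the guard.\<close>
  define f where "f w = (if set w \<subseteq> Sg then act delta (Some s) w else None)" for w
  have "f (p @ a # b # q) = f (p @ b # a # q)" if "(a, b) \<in> I" for p a b q
  proof (cases "set (p @ a # b # q) \<subseteq> Sg \<and> act delta (Some s) p \<noteq> None")
    case True
    then obtain t where t: "act delta (Some s) p = Some t" "t \<in> X"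
      using act_in_X[OF assms(1)] by auto
    then have "act delta (Some t) [a, b] = act delta (Some t) [b, a]"
      using conc_system that unfolding conc_system_def by blast
    with True t show ?thesis
      unfolding f_def by (metis act_append append_Cons append_Nil set_append insert_commute list.set(2))
  qed (auto simp: f_def act_append)
  then have "f u = f v"
    using assms(3) by (rule teq_invariant[rotated])
  with assms(2) teq_set[OF assms(3)] show ?thesis
    by (simp add: f_def)
qed

lemma Mst_teq:
  assumes "s \<in> X" "u \<in> Mst Sg delta (Some s)" "teq I u v"
  shows "v \<in> Mst Sg delta (Some s)"
  using assms act_teq[OF assms(1) _ assms(3)] teq_set[OF assms(3)] by (simp add: Mst_def)

lemma concat_cword_take_nf_in_Mst:
  assumes "\<alpha> \<in> X" "w \<in> Mst Sg delta (Some \<alpha>)"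
  shows "concat (map cword (take i (nf Sg I w))) \<in> Mst Sg delta (Some \<alpha>)"
proof -
  have "concat (map cword (nf Sg I w)) \<in> Mst Sg delta (Some \<alpha>)"
    using assms teq_sym[OF sym_I teq_concat_cword_nf[OF Mst_subset_Sg[OF assms(2)]]]
    by (rule Mst_teq)
  moreover have "concat (map cword (nf Sg I w)) =
      concat (map cword (take i (nf Sg I w))) @ concat (map cword (drop i (nf Sg I w)))"
    by (simp flip: concat_append map_append)
  ultimately show ?thesis
    by (simp add: Mst_append_iff)
qed

lemma hd_nf_in_cliques_at:
  assumes "\<alpha> \<in> X" "w \<in> Mst Sg delta (Some \<alpha>)" "nf Sg I w \<noteq> []"
  shows "hd (nf Sg I w) \<in> cliques_at Sg I delta \<alpha>"
proof -
  have "cword (hd (nf Sg I w)) \<in> Mst Sg delta (Some \<alpha>)"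
    using concat_cword_take_nf_in_Mst[OF assms(1,2), of 1] assms(3)
    by (cases "nf Sg I w") auto
  moreover have "is_clique Sg I (hd (nf Sg I w))"
    using nf_is_nf[OF Mst_subset_Sg[OF assms(2)]] assms(3) by (simp add: is_nf_def)
  ultimately show ?thesis
    by (simp add: cliques_at_def Mst_def)
qed

lemma positive_node_if_maximal:
  assumes "\<alpha> \<in> X" "c \<in> cliques_at Sg I delta \<alpha>"
    and maximal: "\<forall>c'\<in>cliques_at Sg I delta \<alpha>. c \<subseteq> c' \<longrightarrow> c' = c"
  shows "positive_node Sg I delta \<alpha> c"
  unfolding positive_node_def
proof (intro conjI bexI[of _ "cword c"] ballI)
  have c: "is_clique Sg I c" and "act delta (Some \<alpha>) (cword c) \<noteq> None"
    using assms(2) by (auto simp: cliques_at_def)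
  then show cword: "cword c \<in> Mst Sg delta (Some \<alpha>)"
    by (auto simp: Mst_def is_clique_def)
  fix y assume "y \<in> Mst Sg delta (act delta (Some \<alpha>) (cword c))"
  with cword have cy: "cword c @ y \<in> Mst Sg delta (Some \<alpha>)"
    by (simp add: Mst_append_iff)
  then have "nf Sg I (cword c @ y) = foldl (foata_ins I) [c] y"
    by (simp add: nf_append[OF Mst_subset_Sg] nf_cword[OF c])
  then have ne: "nf Sg I (cword c @ y) \<noteq> []" and sub: "c \<subseteq> hd (nf Sg I (cword c @ y))"
    using hd_foldl_foata_ins_mono[of "[c]" I y] by auto
  then show "nf Sg I (cword c @ y) \<noteq> []"
    by simp
  have "hd (nf Sg I (cword c @ y)) \<in> cliques_at Sg I delta \<alpha>"
    by (rule hd_nf_in_cliques_at[OF assms(1) cy ne])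
  with sub maximal show "hd (nf Sg I (cword c @ y)) = c"
    by blast
qed (use assms(2) in \<open>simp add: dsc_node_def\<close>)

lemma positive_node_if_arc_to_positive:
  assumes "dsc_arc Sg I delta \<alpha> c \<alpha>' c'" "positive_node Sg I delta \<alpha>' c'"
  shows "positive_node Sg I delta \<alpha> c"
proof -
  have node: "dsc_node Sg I delta \<alpha> c" and step: "act delta (Some \<alpha>) (cword c) = Some \<alpha>'"
    and "arrow I c c'"
    using assms(1) by (auto simp: dsc_arc_def)
  then have c: "is_clique Sg I c"
    by (simp add: dsc_node_def cliques_at_def)
  obtain x' where x': "x' \<in> Mst Sg delta (Some \<alpha>')"
    and first: "\<forall>y\<in>Mst Sg delta (act delta (Some \<alpha>') x').
      nf Sg I (x' @ y) \<noteq> [] \<and> hd (nf Sg I (x' @ y)) = c'"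
    using assms(2) unfolding positive_node_def by blast
  have cword: "cword c \<in> Mst Sg delta (Some \<alpha>)"
    using c step by (auto simp: Mst_def is_clique_def)
  show ?thesis
    unfolding positive_node_def
  proof (intro conjI bexI[of _ "cword c @ x'"] ballI)
    show "cword c @ x' \<in> Mst Sg delta (Some \<alpha>)"
      using cword x' step by (simp add: Mst_append_iff)
    fix y assume "y \<in> Mst Sg delta (act delta (Some \<alpha>) (cword c @ x'))"
    then have y: "y \<in> Mst Sg delta (act delta (Some \<alpha>') x')"
      using step by (simp add: act_append)
    then have "x' @ y \<in> Mst Sg delta (Some \<alpha>')"
      using x' by (simp add: Mst_append_iff)
    then have "nf Sg I (cword c @ x' @ y) = c # nf Sg I (x' @ y)"
      using first y \<open>arrow I c c'\<close> by (intro nf_cword_append[OF c Mst_subset_Sg]) auto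
    then show "nf Sg I ((cword c @ x') @ y) \<noteq> []" "hd (nf Sg I ((cword c @ x') @ y)) = c"
      by simp_all
  qed (rule node)
qed

lemma positive_node_if_all_letters:
  assumes "\<alpha> \<in> X" "x \<in> Mst Sg delta (Some \<alpha>)" "Sg \<subseteq> set x" "nf Sg I x \<noteq> []"
  shows "positive_node Sg I delta \<alpha> (hd (nf Sg I x))"
  unfolding positive_node_def
proof (intro conjI bexI[of _ x] ballI)
  show "dsc_node Sg I delta \<alpha> (hd (nf Sg I x))"
    using hd_nf_in_cliques_at[OF assms(1,2,4)] by (simp add: dsc_node_def)
  fix y assume "y \<in> Mst Sg delta (act delta (Some \<alpha>) x)"
  then have xy: "set (x @ y) \<subseteq> Sg"
    using assms(2) by (simp add: Mst_append_iff[symmetric] Mst_subset_Sg)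
  have "set y \<subseteq> \<Union>(set (nf Sg I x))"
    using xy assms(3) by (simp add: nf_eq_foata Union_set_foata)
  then have "hd (foldl (foata_ins I) (nf Sg I x) y) = hd (nf Sg I x)"
    by (rule hd_foldl_foata_ins_eq[OF irrefl_I assms(4)])
  then show "nf Sg I (x @ y) \<noteq> []" "hd (nf Sg I (x @ y)) = hd (nf Sg I x)"
    using hd_foldl_foata_ins_mono[OF assms(4)] by (simp_all add: nf_append[OF xy])
qed (rule assms(2))

lemma act_path_state:
  assumes "\<alpha> \<in> X" "w \<in> Mst Sg delta (Some \<alpha>)"
  shows "act delta (Some \<alpha>) (concat (map cword (take i (nf Sg I w)))) = Some (path_state delta \<alpha> (nf Sg I w) i)"
    and "path_state delta \<alpha> (nf Sg I w) i \<in> X"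
proof -
  have prefix: "concat (map cword (take i (nf Sg I w))) \<in> Mst Sg delta (Some \<alpha>)"
    by (rule concat_cword_take_nf_in_Mst[OF assms])
  then show act: "act delta (Some \<alpha>) (concat (map cword (take i (nf Sg I w)))) = Some (path_state delta \<alpha> (nf Sg I w) i)"
    by (auto simp: Mst_def path_state_def)
  show "path_state delta \<alpha> (nf Sg I w) i \<in> X"
    by (rule act_in_X[OF assms(1) Mst_subset_Sg[OF prefix] act])
qed

lemma act_cword_path_state:
  assumes "\<alpha> \<in> X" "w \<in> Mst Sg delta (Some \<alpha>)" "i < length (nf Sg I w)"
  shows "act delta (Some (path_state delta \<alpha> (nf Sg I w) i)) (cword (nf Sg I w ! i))
    = Some (path_state delta \<alpha> (nf Sg I w) (Suc i))"
  using act_path_state(1)[OF assms(1,2), of i] act_path_state(1)[OF assms(1,2), of "Suc i"] assms(3)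
  by (simp add: take_Suc_conv_app_nth act_append)

lemma dsc_node_path:
  assumes "\<alpha> \<in> X" "w \<in> Mst Sg delta (Some \<alpha>)" "i < length (nf Sg I w)"
  shows "dsc_node Sg I delta (path_state delta \<alpha> (nf Sg I w) i) (nf Sg I w ! i)"
proof -
  have "is_clique Sg I (nf Sg I w ! i)"
    using nf_is_nf[OF Mst_subset_Sg[OF assms(2)]] assms(3) by (simp add: is_nf_def)
  with act_cword_path_state[OF assms] show ?thesis
    by (simp add: dsc_node_def cliques_at_def)
qed

lemma dsc_arc_path:
  assumes "\<alpha> \<in> X" "w \<in> Mst Sg delta (Some \<alpha>)" "Suc i < length (nf Sg I w)"
  shows "dsc_arc Sg I delta (path_state delta \<alpha> (nf Sg I w) i) (nf Sg I w ! i)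
    (path_state delta \<alpha> (nf Sg I w) (Suc i)) (nf Sg I w ! Suc i)"
proof -
  have "arrow I (nf Sg I w ! i) (nf Sg I w ! Suc i)"
    using nf_is_nf[OF Mst_subset_Sg[OF assms(2)]] assms(3) by (simp add: is_nf_def successively_nth)
  with assms show ?thesis
    by (simp add: dsc_arc_def dsc_node_path act_cword_path_state)
qed

lemma positive_path_if_last_positive:
  assumes "\<alpha> \<in> X" "w \<in> Mst Sg delta (Some \<alpha>)" "i < length (nf Sg I w)"
    and last: "positive_node Sg I delta (path_state delta \<alpha> (nf Sg I w) (length (nf Sg I w) - 1))
      (last (nf Sg I w))"
  shows "positive_node Sg I delta (path_state delta \<alpha> (nf Sg I w) i) (nf Sg I w ! i)"
proof -
  have "nf Sg I w \<noteq> []"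
    using assms(3) by auto
  have "i \<le> length (nf Sg I w) - 1"
    using assms(3) by simp
  then show ?thesis
  proof (induction rule: inc_induct)
    case base
    show ?case
      using last by (simp add: last_conv_nth[OF \<open>nf Sg I w \<noteq> []\<close>])
  next
    case (step n)
    then have "Suc n < length (nf Sg I w)"
      by simp
    with step.IH show ?case
      using positive_node_if_arc_to_positive dsc_arc_path[OF assms(1,2)] by blast
  qed
qed

lemma cword_snoc_in_Mst:
  assumes "\<beta> \<in> X" "e \<in> cliques_at Sg I delta \<beta>" "d \<subseteq> e" "a \<in> e" "a \<notin> d"
  shows "cword d @ [a] \<in> Mst Sg delta (Some \<beta>)"
proof -
  have e: "is_clique Sg I e" and "cword e \<in> Mst Sg delta (Some \<beta>)"
    using assms(2) by (auto simp: cliques_at_def Mst_def is_clique_def)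
  have da: "is_clique Sg I (d \<union> {a})"
    using assms(3,4) by (intro is_clique_subset[OF e]) auto
  have "(d \<union> {a}) \<union> (e - (d \<union> {a})) = e"
    using assms(3,4) by auto
  then have "teq I (cword e) (cword (d \<union> {a}) @ cword (e - (d \<union> {a})))"
    using teq_cword_union[of "d \<union> {a}" "e - (d \<union> {a})"] e by simp
  then have "cword (d \<union> {a}) @ cword (e - (d \<union> {a})) \<in> Mst Sg delta (Some \<beta>)"
    by (rule Mst_teq[OF assms(1) \<open>cword e \<in> Mst Sg delta (Some \<beta>)\<close>])
  then have "cword (d \<union> {a}) \<in> Mst Sg delta (Some \<beta>)"
    by (simp add: Mst_append_iff)
  moreover have "teq I (cword (d \<union> {a})) (cword d @ [a])"
    using teq_cword_union[OF da] assms(5) by simp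
  ultimately show ?thesis
    by (rule Mst_teq[OF assms(1)])
qed

lemma snoc_in_Mst_if_last_clique_extends:
  assumes "\<alpha> \<in> X" "w \<in> Mst Sg delta (Some \<alpha>)" "nf Sg I w \<noteq> []"
    and "cword (last (nf Sg I w)) @ [a]
      \<in> Mst Sg delta (Some (path_state delta \<alpha> (nf Sg I w) (length (nf Sg I w) - 1)))"
  shows "w @ [a] \<in> Mst Sg delta (Some \<alpha>)"
proof -
  define cs where "cs = nf Sg I w"
  define k where "k = length cs - 1"
  have "cs = take k cs @ [last cs]"
    using assms(3) unfolding k_def cs_def by (metis append_butlast_last_id butlast_conv_take)
  then have "concat (map cword cs) @ [a] = concat (map cword (take k cs @ [last cs])) @ [a]"
    by (rule arg_cong[where f = "\<lambda>xs. concat (map cword xs) @ [a]"])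
  then have split: "concat (map cword cs) @ [a] = concat (map cword (take k cs)) @ cword (last cs) @ [a]"
    by simp
  have "concat (map cword cs) @ [a] \<in> Mst Sg delta (Some \<alpha>)"
    using concat_cword_take_nf_in_Mst[OF assms(1,2), of k] act_path_state(1)[OF assms(1,2), of k] assms(4)
    unfolding split by (simp add: Mst_append_iff cs_def k_def)
  then show ?thesis
    using teq_append_right[OF teq_concat_cword_nf[OF Mst_subset_Sg[OF assms(2)]], folded cs_def]
    by (rule Mst_teq[OF assms(1)])
qed

lemma last_clique_maximal_if_saturated:
  assumes "\<alpha> \<in> X" "w \<in> Mst Sg delta (Some \<alpha>)" "nf Sg I w \<noteq> []"
    and saturated: "\<And>a. a \<in> Sg \<Longrightarrow> w @ [a] \<in> Mst Sg delta (Some \<alpha>) \<Longrightarrow> height Sg I (w @ [a]) \<noteq> height Sg I w"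
    and e: "e \<in> cliques_at Sg I delta (path_state delta \<alpha> (nf Sg I w) (length (nf Sg I w) - 1))"
    and sub: "last (nf Sg I w) \<subseteq> e"
  shows "e = last (nf Sg I w)"
proof (rule ccontr)
  assume "e \<noteq> last (nf Sg I w)"
  with sub obtain a where a: "a \<in> e" "a \<notin> last (nf Sg I w)"
    by blast
  have "is_clique Sg I e"
    using e by (simp add: cliques_at_def)
  then have "a \<in> Sg" and independent: "\<forall>b\<in>last (nf Sg I w). (b, a) \<in> I"
    using a sub by (auto simp: is_clique_def)
  have "cword (last (nf Sg I w)) @ [a]
      \<in> Mst Sg delta (Some (path_state delta \<alpha> (nf Sg I w) (length (nf Sg I w) - 1)))"
    by (rule cword_snoc_in_Mst[OF act_path_state(2)[OF assms(1,2)] e sub a])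
  then have wa: "w @ [a] \<in> Mst Sg delta (Some \<alpha>)"
    by (rule snoc_in_Mst_if_last_clique_extends[OF assms(1-3)])
  have "height Sg I (w @ [a]) = height Sg I w"
    using Mst_subset_Sg[OF wa] length_foata_ins_independent_last[OF assms(3) independent]
    by (simp add: height_def nf_append)
  with saturated[OF \<open>a \<in> Sg\<close> wa] show False
    by blast
qed

lemma positive_path_if_saturated:
  assumes "\<alpha> \<in> X" "w \<in> Mst Sg delta (Some \<alpha>)"
    and saturated: "\<And>a. a \<in> Sg \<Longrightarrow> w @ [a] \<in> Mst Sg delta (Some \<alpha>) \<Longrightarrow> height Sg I (w @ [a]) \<noteq> height Sg I w"
    and "i < length (nf Sg I w)"
  shows "positive_node Sg I delta (path_state delta \<alpha> (nf Sg I w) i) (nf Sg I w ! i)"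
proof (rule positive_path_if_last_positive[OF assms(1,2,4)])
  have "nf Sg I w \<noteq> []"
    using assms(4) by auto
  show "positive_node Sg I delta (path_state delta \<alpha> (nf Sg I w) (length (nf Sg I w) - 1)) (last (nf Sg I w))"
  proof (rule positive_node_if_maximal)
    show "path_state delta \<alpha> (nf Sg I w) (length (nf Sg I w) - 1) \<in> X"
      by (rule act_path_state(2)[OF assms(1,2)])
    show "last (nf Sg I w) \<in> cliques_at Sg I delta (path_state delta \<alpha> (nf Sg I w) (length (nf Sg I w) - 1))"
      using dsc_node_path[OF assms(1,2), of "length (nf Sg I w) - 1"] assms(4)
      by (simp add: dsc_node_def last_conv_nth[OF \<open>nf Sg I w \<noteq> []\<close>])
  qed (use last_clique_maximal_if_saturated[OF assms(1,2) \<open>nf Sg I w \<noteq> []\<close> saturated] in blast)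
qed

lemma exists_saturated_extension:
  assumes "\<alpha> \<in> X" "x \<in> Mst Sg delta (Some \<alpha>)"
  obtains y where "y \<in> Mst Sg delta (act delta (Some \<alpha>) x)" "height Sg I (x @ y) = height Sg I x"
    and "\<And>a. a \<in> Sg \<Longrightarrow> (x @ y) @ [a] \<in> Mst Sg delta (Some \<alpha>) \<Longrightarrow>
      height Sg I ((x @ y) @ [a]) \<noteq> height Sg I (x @ y)"
proof -
  define keeps_height where "keeps_height n \<longleftrightarrow>
    (\<exists>y\<in>Mst Sg delta (act delta (Some \<alpha>) x). height Sg I (x @ y) = height Sg I x \<and> length y = n)" for n
  have "keeps_height 0"
    using assms(2) by (auto simp: keeps_height_def Mst_def)
  moreover have "n \<le> height Sg I x * card Sg" if kept: "keeps_height n" for n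
  proof -
    obtain y where y: "y \<in> Mst Sg delta (act delta (Some \<alpha>) x)"
      "height Sg I (x @ y) = height Sg I x" "length y = n"
      using kept unfolding keeps_height_def by blast
    then have "x @ y \<in> Mst Sg delta (Some \<alpha>)"
      using assms(2) by (simp add: Mst_append_iff)
    with y length_le_height_mult_card[OF Mst_subset_Sg] show ?thesis
      by fastforce
  qed
  ultimately obtain n where n: "keeps_height n" and greatest: "\<And>m. keeps_height m \<Longrightarrow> m \<le> n"
    using Nat.ex_has_greatest_nat[of keeps_height 0 "height Sg I x * card Sg"] by blast
  from n obtain y where y: "y \<in> Mst Sg delta (act delta (Some \<alpha>) x)"
    "height Sg I (x @ y) = height Sg I x" "length y = n"
    unfolding keeps_height_def by blast
  show ?thesis
  proof (rule that[OF y(1,2)])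
    fix a assume "a \<in> Sg" "(x @ y) @ [a] \<in> Mst Sg delta (Some \<alpha>)"
    show "height Sg I ((x @ y) @ [a]) \<noteq> height Sg I (x @ y)"
    proof
      assume "height Sg I ((x @ y) @ [a]) = height Sg I (x @ y)"
      then have "keeps_height (Suc n)"
        unfolding keeps_height_def using \<open>a \<in> Sg\<close> \<open>(x @ y) @ [a] \<in> Mst Sg delta (Some \<alpha>)\<close> y assms(2)
        by (intro bexI[of _ "y @ [a]"]) (auto simp: Mst_append_iff)
      with greatest show False
        by fastforce
    qed
  qed
qed

lemma exists_positive_extension:
  assumes "\<alpha> \<in> X" "x \<in> Mst Sg delta (Some \<alpha>)"
  shows "\<exists>y\<in>Mst Sg delta (act delta (Some \<alpha>) x). height Sg I (x @ y) = height Sg I x \<and>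
    (\<forall>i<height Sg I (x @ y).
      positive_node Sg I delta (path_state delta \<alpha> (nf Sg I (x @ y)) i) (nf Sg I (x @ y) ! i))"
proof -
  obtain y where y: "y \<in> Mst Sg delta (act delta (Some \<alpha>) x)" "height Sg I (x @ y) = height Sg I x"
    and saturated: "\<And>a. a \<in> Sg \<Longrightarrow> (x @ y) @ [a] \<in> Mst Sg delta (Some \<alpha>) \<Longrightarrow>
      height Sg I ((x @ y) @ [a]) \<noteq> height Sg I (x @ y)"
    using exists_saturated_extension[OF assms] by blast
  have "x @ y \<in> Mst Sg delta (Some \<alpha>)"
    using assms(2) y(1) by (simp add: Mst_append_iff)
  then have "positive_node Sg I delta (path_state delta \<alpha> (nf Sg I (x @ y)) i) (nf Sg I (x @ y) ! i)"
    if "i < height Sg I (x @ y)" for i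
    using that positive_path_if_saturated[OF assms(1) _ saturated] by (simp add: height_def)
  with y show ?thesis
    by blast
qed

end

theorem proposition6:
  assumes "conc_system Sg I X delta"
  shows
   "(\<forall>\<alpha>\<in>X. Mst Sg delta (Some \<alpha>) \<noteq> {[]} \<longrightarrow>
       (\<forall>c. c \<in> cliques_at Sg I delta \<alpha> \<and> (\<forall>c'\<in>cliques_at Sg I delta \<alpha>. c \<subseteq> c' \<longrightarrow> c' = c)
            \<longrightarrow> positive_node Sg I delta \<alpha> c))
  \<and> (\<forall>\<alpha>\<in>X. \<forall>c \<alpha>' c'. dsc_arc Sg I delta \<alpha> c \<alpha>' c' \<and> positive_node Sg I delta \<alpha>' c'
            \<longrightarrow> positive_node Sg I delta \<alpha> c)
  \<and> (\<forall>\<alpha>\<in>X. \<forall>x\<in>Mst Sg delta (Some \<alpha>). \<exists>y\<in>Mst Sg delta (act delta (Some \<alpha>) x).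
       height Sg I (x @ y) = height Sg I x \<and>
       (\<forall>i<height Sg I (x @ y).
          positive_node Sg I delta
            (the (act delta (Some \<alpha>) (concat (map cword (take i (nf Sg I (x @ y)))))))
            (nf Sg I (x @ y) ! i)))
  \<and> (\<forall>\<alpha>\<in>X. \<forall>c. null_node Sg I delta \<alpha> c \<longrightarrow>
       (\<forall>x\<in>Mst Sg delta (Some \<alpha>). nf Sg I x \<noteq> [] \<and> hd (nf Sg I x) = c
            \<longrightarrow> (\<exists>a\<in>Sg. a \<notin> set x)))"
proof -
  interpret concurrent_system Sg I X delta
    by (rule concurrent_system.intro[OF assms])
  have null_node_misses_letter: "\<exists>a\<in>Sg. a \<notin> set x"
    if "\<alpha> \<in> X" "null_node Sg I delta \<alpha> c" "x \<in> Mst Sg delta (Some \<alpha>)"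
      "nf Sg I x \<noteq> []" "hd (nf Sg I x) = c" for \<alpha> c x
    using positive_node_if_all_letters[OF that(1,3) _ that(4)] that(2,5) by (auto simp: null_node_def)
  show ?thesis
    apply (intro conjI)
       apply (use positive_node_if_maximal in blast)
      apply (use positive_node_if_arc_to_positive in blast)
     apply (use exists_positive_extension[unfolded path_state_def] in blast)
    apply (use null_node_misses_letter in blast)
    done
qed

end
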